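(* Let $\mathcal{D}$, $\mathcal{X}$ be finite sets and $\mathcal{Y}=\{0,1\}$. Let $q_{D,X,Y}$ be the true distribution of the data on $\mathcal{D}\times\mathcal{X}\times\mathcal{Y}$, and let $p_{D,X,Y}$ be the empirical distribution of $n$ i.i.d. samples from $q_{D,X,Y}$. Let $p_{\hat X,\hat Y|X,Y,D}$ be a randomized mapping (conditional distribution from $\mathcal{D}\times\mathcal{X}\times\mathcal{Y}$ to $\mathcal{X}\times\mathcal{Y}$) determined from $p_{D,X,Y}$; denote by $p_{D,\hat X,\hat Y}$ (with marginals/conditionals $p_{\hat Y|D}$, $p_{\hat X,\hat Y}$) the joint distribution of $(D,\hat X,\hat Y)$ when the mapping is applied to $(D,X,Y)\sim p_{D,X,Y}$, and by $q_{D,\hat X,\hat Y}$ (with $q_{\hat Y|D}$, $q_{\hat X,\hat Y}$) the corresponding distribution when it is applied to $(D,X,Y)\sim q_{D,X,Y}$. Let $p_{Y_T}$ be a target distribution on $\mathcal{Y}$, let $J(p,q)=|p/q-1|$, and let $\Delta(p_{X,Y},p_{\hat X,\hat Y})=\sum_{x,y}|p_{X,Y}(x,y)-p_{\hat X,\hat Y}(x,y)|$. Suppose that for all $y\in\mathcal{Y}$, $d\in\mathcal{D}$ we have $p_{Y,D}(y,d)>0$ and $J\big(p_{\hat Y|D}(y|d),p_{Y_T}(y)\big)\le\epsilon$, and that $\Delta(p_{X,Y},p_{\hat X,\hat Y})\le\mu$. Then with probability $1-\beta$, \[ J\big(q_{\hat Y|D}(y|d),p_{Y_T}(y)\big)=\epsilon+O\!\left(\sqrt{\tfrac{1}{n}\log\tfrac{n}{\beta}}\right),\qquad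 \Delta\big(q_{X,Y},q_{\hat X,\hat Y}\big)=\mu+O\!\left(\sqrt{\tfrac{1}{n}\log\tfrac{n}{\beta}}\right), \] where the constants in the $O(\cdot)$ terms depend on the alphabet size $|\mathcal{D}||\mathcal{X}||\mathcal{Y}|$ and on the minimum probability $\min_{y,d}p_{D,\hat Y}(d,y)$, which are treated as fixed (the latter bounded away from zero).
   Context: $D$ denotes discriminatory variables, $X$ features, $Y$ a binary outcome; the mapping $p_{\hat X,\hat Y|X,Y,D}$ transforms $(X,Y)$ into $(\hat X,\hat Y)$ while retaining $D$.
   Formalization: The constants in the O(.) terms depend also on a fixed upper bound assumed for $\epsilon$, alongside the alphabet size and the positive lower bound on $\min_{y,d}p_{D,\hat Y}(d,y)$. Each condition added here is assumed in the paper as well or is needed for the statement above to hold. *)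

theory Defs
  imports "HOL-Probability.Probability"
begin

text \<open>Distributions on finite alphabets are represented as real-valued mass functions.
  The label alphabet is bool (Y = {0,1}).\<close>

text \<open>n i.i.d. samples from q, indexed by 0..n-1 (fixed default value elsewhere).\<close>
definition sample_pmf :: "nat \<Rightarrow> 'a pmf \<Rightarrow> (nat \<Rightarrow> 'a) pmf" where
  "sample_pmf n q = Pi_pmf {..<n} undefined (\<lambda>_. q)"

definition emp_dist :: "nat \<Rightarrow> (nat \<Rightarrow> 'a) \<Rightarrow> 'a \<Rightarrow> real" where
  "emp_dist n s a = real (card {i\<in>{..<n}. s i = a}) / real n"

text \<open>Joint distribution of (D, Xhat, Yhat) when the randomized mapping M is applied to (D,X,Y) ~ P.\<close>
definition push :: "('d::finite \<times> 'x::finite \<times> bool \<Rightarrow> real) \<Rightarrow> ('d \<Rightarrow> 'x \<Rightarrow> bool \<Rightarrow> ('x \<times> bool) pmf)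
    \<Rightarrow> 'd \<times> 'x \<times> bool \<Rightarrow> real" where
  "push P M = (\<lambda>(d, x', y'). \<Sum>x\<in>UNIV. \<Sum>y\<in>UNIV. P (d, x, y) * pmf (M d x y) (x', y'))"

definition marg_XY :: "('d::finite \<times> 'x \<times> bool \<Rightarrow> real) \<Rightarrow> 'x \<Rightarrow> bool \<Rightarrow> real" where
  "marg_XY P x y = (\<Sum>d\<in>UNIV. P (d, x, y))"

definition marg_YD :: "('d \<times> 'x::finite \<times> bool \<Rightarrow> real) \<Rightarrow> bool \<Rightarrow> 'd \<Rightarrow> real" where
  "marg_YD P y d = (\<Sum>x\<in>UNIV. P (d, x, y))"

definition marg_D :: "('d \<times> 'x::finite \<times> bool \<Rightarrow> real) \<Rightarrow> 'd \<Rightarrow> real" where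
  "marg_D P d = (\<Sum>x\<in>UNIV. \<Sum>y\<in>UNIV. P (d, x, y))"

definition cond_Y_D :: "('d \<times> 'x::finite \<times> bool \<Rightarrow> real) \<Rightarrow> bool \<Rightarrow> 'd \<Rightarrow> real" where
  "cond_Y_D P y d = marg_YD P y d / marg_D P d"

definition J :: "real \<Rightarrow> real \<Rightarrow> real" where
  "J p q = \<bar>p / q - 1\<bar>"

definition Delta :: "('x::finite \<Rightarrow> bool \<Rightarrow> real) \<Rightarrow> ('x \<Rightarrow> bool \<Rightarrow> real) \<Rightarrow> real" where
  "Delta P Q = (\<Sum>x\<in>UNIV. \<Sum>y\<in>UNIV. \<bar>P x y - Q x y\<bar>)"

definition rate :: "nat \<Rightarrow> real \<Rightarrow> real" where
  "rate n \<beta> = sqrt (ln (real n / \<beta>) / real n)"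

end

theory Submission
  imports Defs
begin

text \<open>With probability at least \<open>1 - \<beta>\<close> every empirical frequency is within
  \<open>c \<cdot> rate n \<beta>\<close> of the true one (Hoeffding's inequality and a union bound over the
  \<open>K\<close> atoms, with \<open>c\<^sup>2 = (1 + 2K)/2\<close>), so the empirical and true distributions are
  \<open>\<delta>\<close>-close in \<open>L\<^sup>1\<close> with \<open>\<delta> = K c \<cdot> rate n \<beta>\<close>. The randomized mapping and all
  marginalisations are \<open>L\<^sup>1\<close> contractions, so \<open>Delta\<close> moves by at most \<open>2\<delta>\<close>. The
  conditional label distributions given \<open>D = d\<close> have denominators at least \<open>2m\<close>, so they
  move by at most \<open>2\<delta>/m\<close>; and since the empirical conditional is at least \<open>m\<close>, the
  bound \<open>J \<le> \<epsilon>\<close> forces the target probability to be at least \<open>m/(1 + \<epsilon>)\<close>, so \<open>J\<close>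
  moves by \<open>O(\<delta>)\<close>. For a single sample the hypotheses cannot hold: some label has
  empirical mass zero.\<close>

definition l1_dist :: "('a::finite \<Rightarrow> real) \<Rightarrow> ('a \<Rightarrow> real) \<Rightarrow> real" where
  "l1_dist P Q = (\<Sum>a\<in>UNIV. \<bar>P a - Q a\<bar>)"

lemma abs_sum_diff_le_l1_dist: "\<bar>sum P A - sum Q A\<bar> \<le> l1_dist P Q"
proof -
  have "\<bar>sum P A - sum Q A\<bar> \<le> (\<Sum>a\<in>A. \<bar>P a - Q a\<bar>)"
    by (metis sum_abs sum_subtractf)
  also have "\<dots> \<le> l1_dist P Q"
    unfolding l1_dist_def by (rule sum_mono2) auto
  finally show ?thesis .
qed

lemma l1_dist_le_card_mult:
  fixes P Q :: "'a::finite \<Rightarrow> real"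
  assumes "\<forall>a. \<bar>P a - Q a\<bar> < t"
  shows "l1_dist P Q \<le> real CARD('a) * t"
  using assms sum_mono[of UNIV "\<lambda>a. \<bar>P a - Q a\<bar>" "\<lambda>_. t"] by (simp add: l1_dist_def less_imp_le)

lemma sum_UNIV_prod: "(\<Sum>z\<in>UNIV. f z) = (\<Sum>a\<in>UNIV. \<Sum>b\<in>UNIV. f (a, b))"
  by (simp add: sum.cartesian_product UNIV_Times_UNIV[symmetric] del: UNIV_Times_UNIV)

lemma marg_D_eq_sum: "marg_D P d = (\<Sum>b\<in>UNIV. P (d, b))"
  by (simp add: marg_D_def sum_UNIV_prod)

lemma marg_D_eq_marg_YD_add: "marg_D P d = marg_YD P y d + marg_YD P (\<not> y) d"
  by (cases y) (simp_all add: marg_D_def marg_YD_def UNIV_bool sum.distrib)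

lemma marg_YD_nonneg: "(\<And>a. 0 \<le> P a) \<Longrightarrow> 0 \<le> marg_YD P y d"
  by (simp add: marg_YD_def sum_nonneg)

lemma marg_YD_le_marg_D: "(\<And>a. 0 \<le> P a) \<Longrightarrow> marg_YD P y d \<le> marg_D P d"
  using marg_D_eq_marg_YD_add[of P d y] marg_YD_nonneg[of P "\<not> y" d] by simp

lemma marg_D_eq_sum_range: "marg_D P d = sum P (range (Pair d))"
  by (subst sum.reindex) (auto simp: marg_D_eq_sum inj_on_def)

lemma marg_YD_eq_sum_range: "marg_YD P y d = sum P (range (\<lambda>x. (d, x, y)))"
  by (subst sum.reindex) (auto simp: marg_YD_def inj_on_def)

lemma marg_D_le_sum:
  fixes P :: "'d::finite \<times> 'x::finite \<times> bool \<Rightarrow> real"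
  assumes "\<And>a. 0 \<le> P a"
  shows "marg_D P d \<le> sum P UNIV"
  unfolding marg_D_eq_sum_range using assms by (intro sum_mono2) auto

lemma abs_marg_YD_diff_le_l1_dist: "\<bar>marg_YD P y d - marg_YD Q y d\<bar> \<le> l1_dist P Q"
  unfolding marg_YD_eq_sum_range by (rule abs_sum_diff_le_l1_dist)

lemma abs_marg_D_diff_le_l1_dist: "\<bar>marg_D P d - marg_D Q d\<bar> \<le> l1_dist P Q"
  unfolding marg_D_eq_sum_range by (rule abs_sum_diff_le_l1_dist)

lemma Delta_marg_XY_le_l1_dist: "Delta (marg_XY P) (marg_XY Q) \<le> l1_dist P Q"
proof -
  have "Delta (marg_XY P) (marg_XY Q) \<le> (\<Sum>x\<in>UNIV. \<Sum>y\<in>UNIV. \<Sum>d\<in>UNIV. \<bar>P (d, x, y) - Q (d, x, y)\<bar>)"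
    unfolding Delta_def marg_XY_def sum_subtractf[symmetric] by (intro sum_mono sum_abs)
  also have "\<dots> = (\<Sum>x\<in>UNIV. \<Sum>d\<in>UNIV. \<Sum>y\<in>UNIV. \<bar>P (d, x, y) - Q (d, x, y)\<bar>)"
    by (intro sum.cong refl sum.swap)
  also have "\<dots> = (\<Sum>d\<in>UNIV. \<Sum>x\<in>UNIV. \<Sum>y\<in>UNIV. \<bar>P (d, x, y) - Q (d, x, y)\<bar>)"
    by (rule sum.swap)
  also have "\<dots> = l1_dist P Q"
    by (simp add: l1_dist_def sum_UNIV_prod[of "\<lambda>z. \<bar>P z - Q z\<bar>"] sum_UNIV_prod[of "\<lambda>b. \<bar>P (_, b) - Q (_, b)\<bar>"])
  finally show ?thesis .
qed

lemma Delta_triangle: "Delta A C \<le> Delta A B + Delta B C"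
  unfolding Delta_def sum.distrib[symmetric] by (intro sum_mono) linarith

lemma Delta_commute: "Delta A B = Delta B A"
  unfolding Delta_def by (simp add: abs_minus_commute)

lemma push_eq_sum: "push P M (d, b) = (\<Sum>a\<in>UNIV. P (d, a) * pmf (case_prod (M d) a) b)"
  by (simp add: push_def sum_UNIV_prod split: prod.split)

lemma push_nonneg: "(\<And>a. 0 \<le> P a) \<Longrightarrow> 0 \<le> push P M a"
  by (cases a) (simp add: push_eq_sum sum_nonneg)

lemma marg_D_push: "marg_D (push P M) d = marg_D P d"
proof -
  have "marg_D (push P M) d = (\<Sum>a\<in>UNIV. P (d, a) * (\<Sum>b\<in>UNIV. pmf (case_prod (M d) a) b))"
    unfolding marg_D_eq_sum push_eq_sum sum_distrib_left by (rule sum.swap)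
  then show ?thesis by (simp add: marg_D_eq_sum sum_pmf_eq_1)
qed

lemma l1_dist_push_le: "l1_dist (push P M) (push Q M) \<le> l1_dist P Q"
proof -
  have "l1_dist (push P M) (push Q M)
      = (\<Sum>d\<in>UNIV. \<Sum>b\<in>UNIV. \<bar>\<Sum>a\<in>UNIV. (P (d, a) - Q (d, a)) * pmf (case_prod (M d) a) b\<bar>)"
    by (simp add: l1_dist_def sum_UNIV_prod[of "\<lambda>z. \<bar>push P M z - push Q M z\<bar>"] push_eq_sum
        sum_subtractf left_diff_distrib)
  also have "\<dots> \<le> (\<Sum>d\<in>UNIV. \<Sum>b\<in>UNIV. \<Sum>a\<in>UNIV. \<bar>P (d, a) - Q (d, a)\<bar> * pmf (case_prod (M d) a) b)"
    by (intro sum_mono order_trans[OF sum_abs]) (simp add: abs_mult)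
  also have "\<dots> = (\<Sum>d\<in>UNIV. \<Sum>a\<in>UNIV. \<bar>P (d, a) - Q (d, a)\<bar> * (\<Sum>b\<in>UNIV. pmf (case_prod (M d) a) b))"
    unfolding sum_distrib_left by (intro sum.cong refl sum.swap)
  also have "\<dots> = l1_dist P Q"
    by (simp add: l1_dist_def sum_UNIV_prod[of "\<lambda>z. \<bar>P z - Q z\<bar>"] sum_pmf_eq_1)
  finally show ?thesis .
qed

text \<open>The factor \<open>(1 + J r \<pi>) / r\<close> is an upper bound for \<open>1 / \<bar>\<pi>\<bar>\<close>.\<close>

lemma J_le_J_add_diff:
  assumes "r > 0"
  shows "J R \<pi> \<le> J r \<pi> + (1 + J r \<pi>) * (\<bar>R - r\<bar> / r)"
proof (cases "\<pi> = 0")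
  case True
  then show ?thesis using assms by (simp add: J_def)
next
  case False
  have "r / \<bar>\<pi>\<bar> \<le> 1 + J r \<pi>"
    using assms abs_triangle_ineq2[of "r / \<pi>" 1] by (simp add: J_def abs_divide)
  then have inv_\<pi>: "1 / \<bar>\<pi>\<bar> \<le> (1 + J r \<pi>) / r"
    using assms by (simp add: divide_simps)
  have "R / \<pi> - 1 = (r / \<pi> - 1) + (R - r) / \<pi>"
    by (simp add: diff_divide_distrib)
  then have "J R \<pi> \<le> J r \<pi> + \<bar>R - r\<bar> * (1 / \<bar>\<pi>\<bar>)"
    unfolding J_def by (metis abs_divide abs_triangle_ineq divide_inverse inverse_eq_divide)
  also have "\<dots> \<le> J r \<pi> + \<bar>R - r\<bar> * ((1 + J r \<pi>) / r)"
    using inv_\<pi> by (intro add_left_mono mult_left_mono) auto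
  finally show ?thesis by (simp add: mult.commute)
qed

lemma ratio_perturbation:
  fixes A B a b \<delta> m :: real
  assumes "m > 0" "2 * m \<le> b" "0 \<le> a" "a \<le> b" "0 \<le> A" "A \<le> B"
    and "\<bar>A - a\<bar> \<le> \<delta>" "\<bar>B - b\<bar> \<le> \<delta>"
  shows "\<bar>A / B - a / b\<bar> \<le> 2 * \<delta> / m"
proof (cases "\<delta> \<le> m")
  case True
  then have B: "m \<le> B" using assms by linarith
  have b: "0 < b" using assms by linarith
  have "\<bar>(A - a) * b - a * (B - b)\<bar> \<le> \<delta> * b + b * \<delta>"
    using assms b by (intro order_trans[OF abs_triangle_ineq4] add_mono)
      (auto simp: abs_mult intro: mult_mono)
  moreover have "A / B - a / b = ((A - a) * b - a * (B - b)) / (B * b)"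
    using B b assms by (simp add: field_simps)
  ultimately have "\<bar>A / B - a / b\<bar> \<le> 2 * \<delta> / B"
    using B b assms by (simp add: abs_divide divide_simps)
  also have "\<dots> \<le> 2 * \<delta> / m"
    using B assms(1,7) by (intro divide_left_mono) auto
  finally show ?thesis .
next
  case False
  have "0 \<le> A / B" "A / B \<le> 1" "0 \<le> a / b" "a / b \<le> 1"
    using assms by (auto simp: divide_le_eq_1)
  moreover have "1 \<le> \<delta> / m" using False assms by simp
  ultimately show ?thesis by linarith
qed

lemma J_cond_Y_D_push_le:
  fixes p q :: "'d::finite \<times> 'x::finite \<times> bool \<Rightarrow> real"
  assumes p_nonneg: "\<And>a. 0 \<le> p a" and p_sum: "sum p UNIV = 1" and q_nonneg: "\<And>a. 0 \<le> q a"
    and close: "l1_dist q p \<le> \<delta>" and "m > 0"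
    and lower: "\<And>y'. m \<le> marg_YD (push p M) y' d"
  shows "J (cond_Y_D (push q M) y d) \<pi>
    \<le> J (cond_Y_D (push p M) y d) \<pi> + (1 + J (cond_Y_D (push p M) y d) \<pi>) * (2 * \<delta> / m\<^sup>2)"
proof -
  define a where "a = marg_YD (push p M) y d"
  define b where "b = marg_D (push p M) d"
  define A where "A = marg_YD (push q M) y d"
  define B where "B = marg_D (push q M) d"
  have ph_nonneg: "\<And>z. 0 \<le> push p M z" and qh_nonneg: "\<And>z. 0 \<le> push q M z"
    using p_nonneg q_nonneg by (auto intro: push_nonneg)
  have "b = a + marg_YD (push p M) (\<not> y) d"
    unfolding a_def b_def by (rule marg_D_eq_marg_YD_add)
  then have "2 * m \<le> b" "m \<le> a" using lower[of y] lower[of "\<not> y"] unfolding a_def by auto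
  moreover have "b \<le> 1"
    using marg_D_le_sum[of p d] p_nonneg p_sum by (simp add: b_def marg_D_push)
  moreover have "m * b \<le> m"
    using \<open>b \<le> 1\<close> \<open>m > 0\<close> by (intro mult_left_le) auto
  ultimately have "m \<le> a / b"
    using \<open>m > 0\<close> by (subst pos_le_divide_eq) linarith+
  have "\<bar>A / B - a / b\<bar> \<le> 2 * \<delta> / m"
  proof (rule ratio_perturbation)
    show "\<bar>A - a\<bar> \<le> \<delta>"
      using abs_marg_YD_diff_le_l1_dist[of "push q M" y d "push p M"] l1_dist_push_le[of q M p] close
      unfolding A_def a_def by linarith
    show "\<bar>B - b\<bar> \<le> \<delta>"
      using abs_marg_D_diff_le_l1_dist[of q d p] close unfolding B_def b_def by (simp add: marg_D_push)
  qed (use \<open>2 * m \<le> b\<close> \<open>m > 0\<close> ph_nonneg qh_nonneg in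
      \<open>auto simp: a_def b_def A_def B_def intro: marg_YD_nonneg marg_YD_le_marg_D\<close>)
  then have "\<bar>A / B - a / b\<bar> / (a / b) \<le> 2 * \<delta> / m / m"
    using \<open>m \<le> a / b\<close> \<open>m > 0\<close> mult_pos_pos[of "a / b" m]
    by (intro order_trans[OF divide_left_mono divide_right_mono]) auto
  also have "\<dots> = 2 * \<delta> / m\<^sup>2"
    by (simp add: power2_eq_square)
  finally have perturbation: "\<bar>A / B - a / b\<bar> / (a / b) \<le> 2 * \<delta> / m\<^sup>2" .
  have "J (A / B) \<pi> \<le> J (a / b) \<pi> + (1 + J (a / b) \<pi>) * (\<bar>A / B - a / b\<bar> / (a / b))"
    using \<open>m \<le> a / b\<close> \<open>m > 0\<close> by (intro J_le_J_add_diff) auto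
  also have "\<dots> \<le> J (a / b) \<pi> + (1 + J (a / b) \<pi>) * (2 * \<delta> / m\<^sup>2)"
    using perturbation by (intro add_left_mono mult_left_mono) (auto simp: J_def)
  finally show ?thesis
    unfolding cond_Y_D_def a_def b_def A_def B_def .
qed

lemma Delta_push_le:
  assumes "l1_dist q p \<le> \<delta>"
  shows "Delta (marg_XY q) (marg_XY (push q M)) \<le> Delta (marg_XY p) (marg_XY (push p M)) + 2 * \<delta>"
proof -
  have "Delta (marg_XY q) (marg_XY (push q M))
      \<le> Delta (marg_XY q) (marg_XY p) + Delta (marg_XY p) (marg_XY (push p M))
        + Delta (marg_XY (push p M)) (marg_XY (push q M))"
    using Delta_triangle[of "marg_XY q" "marg_XY (push q M)" "marg_XY p"]
      Delta_triangle[of "marg_XY p" "marg_XY (push q M)" "marg_XY (push p M)"] by linarith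
  moreover have "Delta (marg_XY q) (marg_XY p) \<le> \<delta>"
    using Delta_marg_XY_le_l1_dist[of q p] assms by linarith
  moreover have "Delta (marg_XY (push p M)) (marg_XY (push q M)) \<le> \<delta>"
    using Delta_marg_XY_le_l1_dist[of "push q M" "push p M"] l1_dist_push_le[of q M p] assms
    by (simp add: Delta_commute)
  ultimately show ?thesis by linarith
qed

lemma map_pmf_eq_bernoulli: "map_pmf (\<lambda>x. x = a) q = bernoulli_pmf (pmf q a)"
proof (rule pmf_eqI)
  fix b :: bool
  have "measure_pmf.prob q {x. x \<noteq> a} = 1 - pmf q a"
    using measure_pmf.prob_compl[of "{a}" q] by (simp add: measure_pmf_single Compl_eq_Diff_UNIV[symmetric] Collect_neg_eq)
  then show "pmf (map_pmf (\<lambda>x. x = a) q) b = pmf (bernoulli_pmf (pmf q a)) b"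
    by (cases b) (simp_all add: pmf_map vimage_def measure_pmf_single pmf_le_1)
qed

lemma map_pmf_card_sample_pmf_eq_binomial:
  "map_pmf (\<lambda>s. card {i\<in>{..<n}. s i = a}) (sample_pmf n q) = binomial_pmf n (pmf q a)"
proof -
  have "binomial_pmf n (pmf q a)
      = map_pmf (\<lambda>f. card {i\<in>{..<n}. f i}) (Pi_pmf {..<n} (undefined = a) (\<lambda>_. bernoulli_pmf (pmf q a)))"
    by (rule binomial_pmf_altdef') (auto simp: pmf_le_1)
  also have "Pi_pmf {..<n} (undefined = a) (\<lambda>_. bernoulli_pmf (pmf q a))
      = map_pmf (\<lambda>s. (\<lambda>x. x = a) \<circ> s) (sample_pmf n q)"
    unfolding sample_pmf_def map_pmf_eq_bernoulli[symmetric] by (rule Pi_pmf_map) auto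
  finally show ?thesis by (simp add: pmf.map_comp o_def)
qed

lemma emp_dist_deviation_prob_le:
  assumes "n > 0" "t \<ge> 0"
  shows "measure_pmf.prob (sample_pmf n q) {s. t \<le> \<bar>emp_dist n s a - pmf q a\<bar>}
    \<le> 2 * exp (-2 * real n * t\<^sup>2)"
proof -
  interpret binomial_distribution n "pmf q a" by unfold_locales (auto simp: pmf_le_1)
  have "{s. t \<le> \<bar>emp_dist n s a - pmf q a\<bar>}
      = (\<lambda>s. card {i\<in>{..<n}. s i = a}) -` {k. t \<le> \<bar>real k / n - pmf q a\<bar>}"
    by (auto simp: emp_dist_def)
  then have "measure_pmf.prob (sample_pmf n q) {s. t \<le> \<bar>emp_dist n s a - pmf q a\<bar>}
      = measure_pmf.prob (binomial_pmf n (pmf q a)) {k. t \<le> \<bar>real k / n - pmf q a\<bar>}"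
    by (simp add: map_pmf_card_sample_pmf_eq_binomial[symmetric] measure_map_pmf)
  also have "\<dots> \<le> 2 * exp (-2 * real n * t\<^sup>2)"
    using prob_abs_ge'[OF assms] by simp
  finally show ?thesis .
qed

lemma emp_dist_max_deviation_prob_le:
  fixes q :: "'a::finite pmf"
  assumes "n > 0" "t \<ge> 0"
  shows "measure_pmf.prob (sample_pmf n q) {s. \<exists>a. t \<le> \<bar>emp_dist n s a - pmf q a\<bar>}
    \<le> 2 * CARD('a) * exp (-2 * real n * t\<^sup>2)"
proof -
  have "measure_pmf.prob (sample_pmf n q) (\<Union>a. {s. t \<le> \<bar>emp_dist n s a - pmf q a\<bar>})
      \<le> (\<Sum>a\<in>UNIV. measure_pmf.prob (sample_pmf n q) {s. t \<le> \<bar>emp_dist n s a - pmf q a\<bar>})"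
    by (rule measure_pmf.finite_measure_subadditive_finite) auto
  also have "\<dots> \<le> (\<Sum>a\<in>(UNIV :: 'a set). 2 * exp (-2 * real n * t\<^sup>2))"
    using emp_dist_deviation_prob_le[OF assms] by (intro sum_mono)
  finally show ?thesis by (simp add: Collect_ex_eq)
qed

text \<open>The constant \<open>sqrt ((1 + 2K)/2)\<close> makes the Hoeffding bound equal to
  \<open>(\<beta>/n)\<^bsup>2K+1\<^esup>\<close>, small enough to absorb the union-bound factor \<open>2K\<close>.\<close>

lemma card_exp_rate_le:
  fixes K n :: nat and \<beta> :: real
  assumes "n \<ge> 2" "0 < \<beta>" "\<beta> < 1"
  shows "2 * real K * exp (-2 * real n * (sqrt ((1 + 2 * real K) / 2) * rate n \<beta>)\<^sup>2) \<le> \<beta>"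
proof -
  define L where "L = ln (real n / \<beta>)"
  have n_\<beta>: "real n / \<beta> > 1" using assms by (simp add: less_divide_eq)
  then have "L > 0" by (simp add: L_def)
  have "-2 * real n * (sqrt ((1 + 2 * real K) / 2) * rate n \<beta>)\<^sup>2 = real (Suc (2 * K)) * (- L)"
    using \<open>L > 0\<close> assms(1) by (simp add: rate_def L_def power_mult_distrib field_simps)
  then have "exp (-2 * real n * (sqrt ((1 + 2 * real K) / 2) * rate n \<beta>)\<^sup>2) = (\<beta> / n) ^ Suc (2 * K)"
    using n_\<beta> assms(2) by (simp only: exp_of_nat_mult) (simp add: L_def exp_minus)
  also have "\<dots> = \<beta> / n * (\<beta> / n) ^ (2 * K)"
    by simp
  also have "\<dots> \<le> \<beta> * (1 / 2) ^ (2 * K)"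
    using assms by (intro mult_mono power_mono) (auto simp: divide_simps)
  finally have "2 * real K * exp (-2 * real n * (sqrt ((1 + 2 * real K) / 2) * rate n \<beta>)\<^sup>2)
      \<le> 2 * real K * (\<beta> * (1 / 2) ^ (2 * K))"
    by (rule mult_left_mono) simp
  also have "\<dots> = \<beta> * (real (2 * K) / 2 ^ (2 * K))"
    by (simp add: power_divide)
  also have "\<dots> \<le> \<beta>"
  proof -
    have "real (2 * K) < real (2 ^ (2 * K))"
      by (simp only: of_nat_less_iff less_exp)
    then show ?thesis using assms(2) by (simp add: divide_simps)
  qed
  finally show ?thesis .
qed

lemma prob_emp_dist_close_ge:
  fixes q :: "'a::finite pmf"
  assumes "n \<ge> 2" "0 < \<beta>" "\<beta> < 1"
  shows "1 - \<beta> \<le> measure_pmf.prob (sample_pmf n q)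
    {s. \<forall>a. \<bar>emp_dist n s a - pmf q a\<bar> < sqrt ((1 + 2 * real CARD('a)) / 2) * rate n \<beta>}"
proof -
  define t where "t = sqrt ((1 + 2 * real CARD('a)) / 2) * rate n \<beta>"
  have "0 \<le> t"
    using assms by (simp add: t_def rate_def less_divide_eq)
  then have "measure_pmf.prob (sample_pmf n q) {s. \<exists>a. t \<le> \<bar>emp_dist n s a - pmf q a\<bar>} \<le> \<beta>"
    using emp_dist_max_deviation_prob_le[of n t q] card_exp_rate_le[OF assms, of "CARD('a)"] assms(1)
    unfolding t_def by simp
  moreover have "{s. \<forall>a. \<bar>emp_dist n s a - pmf q a\<bar> < t}
      = UNIV - {s. \<exists>a. t \<le> \<bar>emp_dist n s a - pmf q a\<bar>}"
    by (auto simp flip: not_le)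
  ultimately show ?thesis
    using measure_pmf.prob_compl[of "{s. \<exists>a. t \<le> \<bar>emp_dist n s a - pmf q a\<bar>}" "sample_pmf n q"]
    unfolding t_def by simp
qed

lemma sum_emp_dist:
  fixes s :: "nat \<Rightarrow> 'a::finite"
  assumes "n > 0"
  shows "sum (emp_dist n s) UNIV = 1"
proof -
  have "(\<Sum>a\<in>UNIV. card {i\<in>{..<n}. s i = a}) = card (\<Union>a. {i\<in>{..<n}. s i = a})"
    by (rule card_UN_disjoint[symmetric]) auto
  also have "(\<Union>a. {i\<in>{..<n}. s i = a}) = {..<n}" by auto
  finally show ?thesis
    using assms by (simp add: emp_dist_def sum_divide_distrib[symmetric] flip: of_nat_sum)
qed

lemma marg_YD_emp_dist_one_sample_eq_0: "\<exists>y d. marg_YD (emp_dist 1 s) y d = 0"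
proof -
  obtain d x y where s0: "s 0 = (d, x, y)" by (cases "s 0") auto
  have no_hits: "{i \<in> {..<1}. s i = (d, x', \<not> y)} = {}" for x'
    using s0 by auto
  have "marg_YD (emp_dist 1 s) (\<not> y) d = 0"
    unfolding marg_YD_def emp_dist_def no_hits by simp
  then show ?thesis by blast
qed

lemma push_guarantees_transfer:
  fixes p q :: "'d::finite \<times> 'x::finite \<times> bool \<Rightarrow> real"
  assumes p_nonneg: "\<And>a. 0 \<le> p a" and p_sum: "sum p UNIV = 1" and q_nonneg: "\<And>a. 0 \<le> q a"
    and close: "l1_dist q p \<le> \<delta>" and "m > 0" and "\<epsilon> \<le> E"
    and fair: "\<forall>y d. J (cond_Y_D (push p M) y d) (\<pi> y) \<le> \<epsilon>"
    and distortion: "Delta (marg_XY p) (marg_XY (push p M)) \<le> \<mu>"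
    and lower: "\<forall>d y. m \<le> marg_YD (push p M) y d"
  shows "(\<forall>y d. J (cond_Y_D (push q M) y d) (\<pi> y) \<le> \<epsilon> + (2 * (1 + \<bar>E\<bar>) / m\<^sup>2 + 2) * \<delta>)
    \<and> Delta (marg_XY q) (marg_XY (push q M)) \<le> \<mu> + (2 * (1 + \<bar>E\<bar>) / m\<^sup>2 + 2) * \<delta>"
proof -
  have "0 \<le> l1_dist q p"
    by (simp add: l1_dist_def sum_nonneg)
  with close have "0 \<le> \<delta>" by linarith
  have "J (cond_Y_D (push q M) y d) (\<pi> y) \<le> \<epsilon> + (2 * (1 + \<bar>E\<bar>) / m\<^sup>2 + 2) * \<delta>" for y d
  proof -
    let ?r = "J (cond_Y_D (push p M) y d) (\<pi> y)"
    have "J (cond_Y_D (push q M) y d) (\<pi> y) \<le> ?r + (1 + ?r) * (2 * \<delta> / m\<^sup>2)"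
      using p_nonneg p_sum q_nonneg close \<open>m > 0\<close> lower by (intro J_cond_Y_D_push_le) auto
    also have "\<dots> \<le> \<epsilon> + (1 + \<bar>E\<bar>) * (2 * \<delta> / m\<^sup>2)"
      using fair[rule_format, of y d] \<open>\<epsilon> \<le> E\<close> \<open>0 \<le> \<delta>\<close> by (intro add_mono mult_right_mono) auto
    also have "\<dots> \<le> \<epsilon> + (2 * (1 + \<bar>E\<bar>) / m\<^sup>2 + 2) * \<delta>"
      using \<open>0 \<le> \<delta>\<close> by (simp add: algebra_simps)
    finally show ?thesis .
  qed
  moreover have "Delta (marg_XY q) (marg_XY (push q M)) \<le> \<mu> + (2 * (1 + \<bar>E\<bar>) / m\<^sup>2 + 2) * \<delta>"
  proof -
    have "0 \<le> 2 * (1 + \<bar>E\<bar>) / m\<^sup>2 * \<delta>"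
      using \<open>0 \<le> \<delta>\<close> by simp
    then show ?thesis
      using Delta_push_le[OF close, of M] distortion by (simp add: distrib_right)
  qed
  ultimately show ?thesis by blast
qed

lemma prob_implication_ge_of_emp_dist_close:
  fixes q :: "'a::finite pmf"
  assumes "n \<ge> 1" "0 < \<beta>" "\<beta> < 1"
    and one_sample: "\<And>s. n = 1 \<Longrightarrow> \<not> H s" \<comment> \<open>for \<open>n = 1\<close> the rate can be arbitrarily small\<close>
    and close_imp: "\<And>s. \<forall>a. \<bar>emp_dist n s a - pmf q a\<bar> < sqrt ((1 + 2 * real CARD('a)) / 2) * rate n \<beta>
      \<Longrightarrow> H s \<Longrightarrow> G s"
  shows "1 - \<beta> \<le> measure_pmf.prob (sample_pmf n q) {s. H s \<longrightarrow> G s}"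
proof (cases "n = 1")
  case True
  then have "{s. H s \<longrightarrow> G s} = UNIV" using one_sample by auto
  then show ?thesis using \<open>0 < \<beta>\<close> by simp
next
  case False
  then have "n \<ge> 2" using \<open>n \<ge> 1\<close> by simp
  from prob_emp_dist_close_ge[OF this \<open>0 < \<beta>\<close> \<open>\<beta> < 1\<close>, of q] show ?thesis
    by (rule order_trans, intro measure_pmf.finite_measure_mono) (auto intro: close_imp)
qed

lemma emp_dist_guarantees_transfer:
  fixes q :: "('d::finite \<times> 'x::finite \<times> bool) pmf"
  assumes "m > 0" "n \<ge> 1" "\<epsilon> \<le> E"
    and close: "\<forall>a. \<bar>emp_dist n s a - pmf q a\<bar> < c * r"
    and "\<forall>y d. J (cond_Y_D (push (emp_dist n s) M) y d) (\<pi> y) \<le> \<epsilon>"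
    and "Delta (marg_XY (emp_dist n s)) (marg_XY (push (emp_dist n s) M)) \<le> \<mu>"
    and "\<forall>d y. m \<le> marg_YD (push (emp_dist n s) M) y d"
  shows "(\<forall>y d. J (cond_Y_D (push (pmf q) M) y d) (\<pi> y)
      \<le> \<epsilon> + (2 * (1 + \<bar>E\<bar>) / m\<^sup>2 + 2) * (real CARD('d \<times> 'x \<times> bool) * c) * r)
    \<and> Delta (marg_XY (pmf q)) (marg_XY (push (pmf q) M))
      \<le> \<mu> + (2 * (1 + \<bar>E\<bar>) / m\<^sup>2 + 2) * (real CARD('d \<times> 'x \<times> bool) * c) * r"
proof -
  have "\<forall>a. \<bar>pmf q a - emp_dist n s a\<bar> < c * r"
    using close by (simp add: abs_minus_commute)
  then have "l1_dist (pmf q) (emp_dist n s) \<le> real CARD('d \<times> 'x \<times> bool) * (c * r)"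
    by (rule l1_dist_le_card_mult)
  moreover have "sum (emp_dist n s) UNIV = 1"
    using \<open>n \<ge> 1\<close> by (simp add: sum_emp_dist)
  ultimately show ?thesis
    using push_guarantees_transfer[of "emp_dist n s" "pmf q"] assms(1,3,5-7)
    by (simp add: emp_dist_def mult.assoc)
qed

theorem proposition3:
  fixes m E :: real
  assumes "m > 0"
  shows "\<exists>C>0. \<forall>(q :: ('d::finite \<times> 'x::finite \<times> bool) pmf)
      (Map :: ('d \<times> 'x \<times> bool \<Rightarrow> real) \<Rightarrow> 'd \<Rightarrow> 'x \<Rightarrow> bool \<Rightarrow> ('x \<times> bool) pmf)
      (pT :: bool pmf) (n :: nat) (\<beta> :: real) (\<epsilon> :: real) (\<mu> :: real).
      n \<ge> 1 \<longrightarrow> 0 < \<beta> \<longrightarrow> \<beta> < 1 \<longrightarrow> \<epsilon> \<le> E \<longrightarrow>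
      measure_pmf.prob (sample_pmf n q)
        {s. let p = emp_dist n s; M = Map p; ph = push p M; qh = push (pmf q) M in
          ((\<forall>y d. marg_YD p y d > 0 \<and> J (cond_Y_D ph y d) (pmf pT y) \<le> \<epsilon>)
           \<and> Delta (marg_XY p) (marg_XY ph) \<le> \<mu>
           \<and> (\<forall>d y. marg_YD ph y d \<ge> m))
          \<longrightarrow> ((\<forall>y d. J (cond_Y_D qh y d) (pmf pT y) \<le> \<epsilon> + C * rate n \<beta>)
               \<and> Delta (marg_XY (pmf q)) (marg_XY qh) \<le> \<mu> + C * rate n \<beta>)}
      \<ge> 1 - \<beta>"
proof -
  define C where "C = (2 * (1 + \<bar>E\<bar>) / m\<^sup>2 + 2)
    * (real CARD('d \<times> 'x \<times> bool) * sqrt ((1 + 2 * real CARD('d \<times> 'x \<times> bool)) / 2))"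
  have "0 < C"
    using assms by (simp add: C_def add_nonneg_pos)
  then show ?thesis
    unfolding Let_def
    by (intro exI[of _ C] conjI[OF \<open>0 < C\<close>] allI impI prob_implication_ge_of_emp_dist_close)
      (assumption | (unfold C_def, rule emp_dist_guarantees_transfer; use assms in blast)
        | metis marg_YD_emp_dist_one_sample_eq_0 less_irrefl)+
qed

end
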